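(* Every left synchronous relation and every right synchronous relation over $\Sigma$ is realized by some transducer that is zero-avoiding with bound $0$. Moreover, both inclusions are proper: there is a relation realized by a transducer that is zero-avoiding with bound $0$ (for instance $(00/0)^*=\{0^{2i}/0^i : i\in\mathbb N_0\}$) which is neither left synchronous nor right synchronous.
   Context: A transducer is a quintuple $\mathcal T=(Q,\Sigma,E,I,F)$ with finite state set $Q$, finite alphabet $\Sigma$, finite transition set $E\subseteq Q\times\{x/y : x,y\in\Sigma\cup\{\lambda\}\}\times Q$ ($\lambda$ the empty word), nonempty initial set $I\subseteq Q$, final set $F\subseteq Q$. Paths, labels (concatenation of input parts / output parts), computations (empty or starting at an initial state) and accepting computations (empty with $I\cap F\neq\emptyset$, or nonempty ending at a final state) are as usual; $R(\mathcal T)$ is the set of labels of accepting computations. For a path $P$ with label $u/v$, $d(P)=|u|-|v|$, and $d_{max}(P)=\max\{|d(Q)| : Q\text{ a prefix of }P\}$. $\mathcal T$ is zero-avoiding with bound $k$ if for every computation $P$, $d_{max}(P)>k$ implies $d(P)\neq0$. A transducer is letter-to-letter if all its labels are $\sigma/\tau$ with $\sigma,\tau\in\Sigma$. The product of relations is $R_1R_2=\{u_1u_2/v_1v_2 : u_1/v_1\in R_1,\ u_2/v_2\in R_2\}$. A relation $R\subseteq\Sigma^*\times\Sigma^*$ is left synchronous if it is a finite union of relations each of the form $S(A\times\{\lambda\})$ or $S(\{\lambda\}\times A)$, where $A\subseteq\Sigma^*$ is regular and $S$ is realized by a letter-to-letter transducer; it is right synchronous if it is a finite union of relations each of the form $(A\times\{\lambda\})S$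 or $(\{\lambda\}\times A)S$ with $A,S$ as before. *)

theory Defs
  imports Main
begin

text \<open>Transitions: (source, (x, y), target), where None encodes the empty word lambda.\<close>
type_synonym ('q, 'a) edge = "'q \<times> ('a option \<times> 'a option) \<times> 'q"

record ('q, 'a) transducer =
  states :: "'q set"
  trans  :: "('q, 'a) edge set"
  init   :: "'q set"
  fin    :: "'q set"

definition transducer :: "'a set \<Rightarrow> ('q, 'a) transducer \<Rightarrow> bool" where
  "transducer \<Sigma> T \<longleftrightarrow>
     finite (states T) \<and> finite (trans T) \<and>
     (\<forall>(p, (x, y), q) \<in> trans T. p \<in> states T \<and> q \<in> states T \<and>
        set_option x \<subseteq> \<Sigma> \<and> set_option y \<subseteq> \<Sigma>) \<and>
     init T \<noteq> {} \<and> init T \<subseteq> states T \<and> fin T \<subseteq> states T"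

definition letter_to_letter :: "'a set \<Rightarrow> ('q, 'a) transducer \<Rightarrow> bool" where
  "letter_to_letter \<Sigma> T \<longleftrightarrow> transducer \<Sigma> T \<and>
     (\<forall>(p, (x, y), q) \<in> trans T. x \<noteq> None \<and> y \<noteq> None)"

definition src :: "('q, 'a) edge \<Rightarrow> 'q" where "src e = fst e"
definition tgt :: "('q, 'a) edge \<Rightarrow> 'q" where "tgt e = snd (snd e)"

definition olist :: "'a option \<Rightarrow> 'a list" where
  "olist x = (case x of None \<Rightarrow> [] | Some c \<Rightarrow> [c])"

definition is_path :: "('q, 'a) transducer \<Rightarrow> ('q, 'a) edge list \<Rightarrow> bool" where
  "is_path T es \<longleftrightarrow> set es \<subseteq> trans T \<and>
     (\<forall>i. Suc i < length es \<longrightarrow> tgt (es ! i) = src (es ! Suc i))"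

definition inp :: "('q, 'a) edge list \<Rightarrow> 'a list" where
  "inp es = concat (map (\<lambda>e. olist (fst (fst (snd e)))) es)"

definition outp :: "('q, 'a) edge list \<Rightarrow> 'a list" where
  "outp es = concat (map (\<lambda>e. olist (snd (fst (snd e)))) es)"

definition computation :: "('q, 'a) transducer \<Rightarrow> ('q, 'a) edge list \<Rightarrow> bool" where
  "computation T es \<longleftrightarrow> is_path T es \<and> (es = [] \<or> src (hd es) \<in> init T)"

definition accepting :: "('q, 'a) transducer \<Rightarrow> ('q, 'a) edge list \<Rightarrow> bool" where
  "accepting T es \<longleftrightarrow> computation T es \<and>
     ((es = [] \<and> init T \<inter> fin T \<noteq> {}) \<or> (es \<noteq> [] \<and> tgt (last es) \<in> fin T))"

definition rel :: "('q, 'a) transducer \<Rightarrow> ('a list \<times> 'a list) set" where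
  "rel T = {(inp es, outp es) | es. accepting T es}"

definition d :: "('q, 'a) edge list \<Rightarrow> int" where
  "d es = int (length (inp es)) - int (length (outp es))"

definition dmax :: "('q, 'a) edge list \<Rightarrow> int" where
  "dmax es = Max {\<bar>d (take i es)\<bar> | i. i \<le> length es}"

definition zero_avoiding :: "('q, 'a) transducer \<Rightarrow> nat \<Rightarrow> bool" where
  "zero_avoiding T k \<longleftrightarrow>
     (\<forall>es. computation T es \<longrightarrow> dmax es > int k \<longrightarrow> d es \<noteq> 0)"

definition rel_prod :: "('a list \<times> 'a list) set \<Rightarrow> ('a list \<times> 'a list) set \<Rightarrow> ('a list \<times> 'a list) set" where
  "rel_prod R1 R2 = {(u1 @ u2, v1 @ v2) | u1 v1 u2 v2. (u1, v1) \<in> R1 \<and> (u2, v2) \<in> R2}"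

fun nfa_steps :: "('s \<Rightarrow> 'a \<Rightarrow> 's set) \<Rightarrow> 's set \<Rightarrow> 'a list \<Rightarrow> 's set" where
  "nfa_steps \<delta> S [] = S"
| "nfa_steps \<delta> S (c # w) = nfa_steps \<delta> (\<Union>q\<in>S. \<delta> q c) w"

definition regular :: "'a set \<Rightarrow> 'a list set \<Rightarrow> bool" where
  "regular \<Sigma> A \<longleftrightarrow> (\<exists>(Q :: nat set) (\<delta> :: nat \<Rightarrow> 'a \<Rightarrow> nat set) I F.
     finite Q \<and> I \<subseteq> Q \<and> F \<subseteq> Q \<and> (\<forall>q\<in>Q. \<forall>c\<in>\<Sigma>. \<delta> q c \<subseteq> Q) \<and>
     A = {w. set w \<subseteq> \<Sigma> \<and> nfa_steps \<delta> I w \<inter> F \<noteq> {}})"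

definition synchronous_rel :: "'a set \<Rightarrow> ('a list \<times> 'a list) set \<Rightarrow> bool" where
  "synchronous_rel \<Sigma> S \<longleftrightarrow> (\<exists>T :: (nat, 'a) transducer. letter_to_letter \<Sigma> T \<and> rel T = S)"

definition left_piece :: "'a set \<Rightarrow> ('a list \<times> 'a list) set \<Rightarrow> bool" where
  "left_piece \<Sigma> X \<longleftrightarrow> (\<exists>S A. synchronous_rel \<Sigma> S \<and> regular \<Sigma> A \<and>
     (X = rel_prod S (A \<times> {[]}) \<or> X = rel_prod S ({[]} \<times> A)))"

definition right_piece :: "'a set \<Rightarrow> ('a list \<times> 'a list) set \<Rightarrow> bool" where
  "right_piece \<Sigma> X \<longleftrightarrow> (\<exists>S A. synchronous_rel \<Sigma> S \<and> regular \<Sigma> A \<and>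
     (X = rel_prod (A \<times> {[]}) S \<or> X = rel_prod ({[]} \<times> A) S))"

definition left_synchronous :: "'a set \<Rightarrow> ('a list \<times> 'a list) set \<Rightarrow> bool" where
  "left_synchronous \<Sigma> R \<longleftrightarrow> (\<exists>P. finite P \<and> (\<forall>X\<in>P. left_piece \<Sigma> X) \<and> R = \<Union>P)"

definition right_synchronous :: "'a set \<Rightarrow> ('a list \<times> 'a list) set \<Rightarrow> bool" where
  "right_synchronous \<Sigma> R \<longleftrightarrow> (\<exists>P. finite P \<and> (\<forall>X\<in>P. right_piece \<Sigma> X) \<and> R = \<Union>P)"

end

theory Submission
  imports Defs "HOL-Library.Nat_Bijection"
begin

text \<open>
  Orient every state up or down so that transitions preserve the orientation and change the
  length difference \<open>|u| - |v|\<close> by \<open>0\<close> or by \<open>+1\<close> (up) resp. \<open>-1\<close> (down). Along a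
  computation of an oriented transducer the running difference is then monotone, so once it
  has left \<open>0\<close> it never returns: the transducer is zero-avoiding for every bound.
  Letter-to-letter transducers are oriented (all steps are \<open>0\<close>), an automaton for \<open>A\<close> turned
  into a transducer that only reads (only writes) is oriented up (down), and disjoint unions and
  concatenations of equally oriented transducers remain oriented; this covers all left and right
  synchronous relations.

  Conversely, in a product of a length-preserving relation with \<open>A \<times> {\<lambda>}\<close> or \<open>{\<lambda>} \<times> A\<close>, in
  either order, all pairs of the form \<open>(a^2i, a^i)\<close> have the same output length. Finitely many such
  products therefore cannot cover \<open>(aa/a)*\<close>, whose output lengths are unbounded.
\<close>

inductive reach :: "('q, 'a) transducer \<Rightarrow> 'q \<Rightarrow> 'a list \<Rightarrow> 'a list \<Rightarrow> 'q \<Rightarrow> bool" for T where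
  refl: "reach T q [] [] q"
| step: "(p, (x, y), q) \<in> trans T \<Longrightarrow> reach T q u v r \<Longrightarrow> reach T p (olist x @ u) (olist y @ v) r"

lemma reach_append: "reach T p u v q \<Longrightarrow> reach T q u' v' r \<Longrightarrow> reach T p (u @ u') (v @ v') r"
  by (induction rule: reach.induct) (auto intro: reach.step)

lemma is_path_Cons:
  "is_path T (e # es) \<longleftrightarrow> e \<in> trans T \<and> is_path T es \<and> (es \<noteq> [] \<longrightarrow> tgt e = src (hd es))"
proof -
  have "(\<forall>i. Suc i < length (e # es) \<longrightarrow> tgt ((e # es) ! i) = src ((e # es) ! Suc i)) \<longleftrightarrow>
      (es \<noteq> [] \<longrightarrow> tgt e = src (hd es)) \<and>
      (\<forall>i. Suc i < length es \<longrightarrow> tgt (es ! i) = src (es ! Suc i))"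
    by (auto simp: hd_conv_nth nth_Cons split: nat.splits)
  then show ?thesis unfolding is_path_def by auto
qed

lemma inp_simps [simp]: "inp [] = []" "inp (e # es) = olist (fst (fst (snd e))) @ inp es"
  by (simp_all add: inp_def)

lemma outp_simps [simp]: "outp [] = []" "outp (e # es) = olist (snd (fst (snd e))) @ outp es"
  by (simp_all add: outp_def)

lemma reach_if_path:
  "is_path T es \<Longrightarrow> es \<noteq> [] \<Longrightarrow> reach T (src (hd es)) (inp es) (outp es) (tgt (last es))"
proof (induction es)
  case (Cons e es)
  obtain p x y q where e: "e = (p, (x, y), q)" by (cases e) auto
  have "reach T q (inp es) (outp es) (tgt (last (e # es)))"
    using Cons e by (cases "es = []") (auto simp: is_path_Cons tgt_def intro: reach.refl)
  moreover have "(p, (x, y), q) \<in> trans T" using Cons.prems e by (simp add: is_path_Cons)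
  ultimately show ?case
    using e by (auto simp: src_def dest: reach.step)
qed simp

lemma path_if_reach:
  "reach T p u v q \<Longrightarrow> \<exists>es. is_path T es \<and> inp es = u \<and> outp es = v \<and>
     (es = [] \<and> p = q \<or> es \<noteq> [] \<and> src (hd es) = p \<and> tgt (last es) = q)"
proof (induction rule: reach.induct)
  case (refl q)
  show ?case by (rule exI[of _ "[]"]) (simp add: is_path_def)
next
  case (step p x y q u v r)
  then obtain es where es: "is_path T es" "inp es = u" "outp es = v"
    "es = [] \<and> q = r \<or> es \<noteq> [] \<and> src (hd es) = q \<and> tgt (last es) = r" by blast
  then show ?case
    using step.hyps by (intro exI[of _ "(p, (x, y), q) # es"]) (auto simp: is_path_Cons src_def tgt_def)
qed

lemma rel_eq_reach: "rel T = {(u, v). \<exists>p\<in>init T. \<exists>q\<in>fin T. reach T p u v q}"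
proof (intro set_eqI iffI)
  fix w assume "w \<in> rel T"
  then obtain es where w: "w = (inp es, outp es)" and acc: "accepting T es" by (auto simp: rel_def)
  show "w \<in> {(u, v). \<exists>p\<in>init T. \<exists>q\<in>fin T. reach T p u v q}"
  proof (cases "es = []")
    case True
    then show ?thesis using w acc reach.refl[of T] by (auto simp: accepting_def)
  next
    case False
    then show ?thesis using w acc reach_if_path[of T es] by (auto simp: accepting_def computation_def)
  qed
next
  fix w assume "w \<in> {(u, v). \<exists>p\<in>init T. \<exists>q\<in>fin T. reach T p u v q}"
  then obtain u v p q where "w = (u, v)" "p \<in> init T" "q \<in> fin T" "reach T p u v q" by blast
  with path_if_reach[of T p u v q] show "w \<in> rel T"
    unfolding rel_def accepting_def computation_def by blast
qed

lemma reach_map: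
  assumes "\<And>p l q. (p, l, q) \<in> trans T \<Longrightarrow> (f p, l, f q) \<in> trans T'"
  shows "reach T p u v q \<Longrightarrow> reach T' (f p) u v (f q)"
  by (induction rule: reach.induct) (auto intro: reach.intros assms)

lemma reach_pullback:
  assumes "\<And>p l q'. (f p, l, q') \<in> trans T' \<Longrightarrow> \<exists>q. q' = f q \<and> (p, l, q) \<in> trans T"
  shows "reach T' p' u v q' \<Longrightarrow> p' = f p \<Longrightarrow> \<exists>q. q' = f q \<and> reach T p u v q"
proof (induction arbitrary: p rule: reach.induct)
  case refl
  then show ?case by (auto intro: reach.refl)
next
  case (step p' x y q' u v r')
  then show ?case by (metis assms reach.step)
qed

definition weight :: "('q, 'a) edge \<Rightarrow> int" where
  "weight e = int (length (olist (fst (fst (snd e))))) - int (length (olist (snd (fst (snd e)))))"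

lemma d_eq_sum_weight: "d es = (\<Sum>e\<leftarrow>es. weight e)"
  by (induction es) (auto simp: d_def weight_def)

definition orientation :: "bool \<Rightarrow> int" where
  "orientation b = (if b then 1 else -1)"

definition oriented :: "('q, 'a) transducer \<Rightarrow> ('q \<Rightarrow> bool) \<Rightarrow> bool" where
  "oriented T up \<longleftrightarrow>
     (\<forall>e\<in>trans T. up (tgt e) = up (src e) \<and> weight e \<in> {0, orientation (up (src e))})"

lemma oriented_path_weight:
  assumes "oriented T up"
  shows "is_path T es \<Longrightarrow> e \<in> set es \<Longrightarrow> weight e \<in> {0, orientation (up (src (hd es)))}"
proof (induction es)
  case (Cons e' es)
  have e': "e' \<in> trans T" and "is_path T es" and link: "es \<noteq> [] \<Longrightarrow> tgt e' = src (hd es)"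
    using Cons.prems by (auto simp: is_path_Cons)
  show ?case
  proof (cases "e = e'")
    case False
    then have "e \<in> set es" using Cons.prems by simp
    then have "es \<noteq> []" and "weight e \<in> {0, orientation (up (src (hd es)))}"
      using Cons.IH \<open>is_path T es\<close> by auto
    moreover have "up (tgt e') = up (src e')" using e' assms unfolding oriented_def by blast
    ultimately show ?thesis using link by simp
  next
    case True
    then show ?thesis using e' assms unfolding oriented_def by simp
  qed
qed simp

lemma d_take_nonzero_imp_d_nonzero:
  assumes weights: "\<forall>e\<in>set es. weight e \<in> {0, s}" and s: "s \<noteq> 0" and "d (take i es) \<noteq> 0"
  shows "d es \<noteq> 0"
proof -
  have "0 \<le> s * weight e" if "e \<in> set es" for e
    using weights that by auto
  then have nonneg: "0 \<le> s * d xs" if "set xs \<subseteq> set es" for xs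
    using that unfolding d_eq_sum_weight sum_list_const_mult[symmetric]
    by (intro sum_list_nonneg) auto
  have "d es = d (take i es) + d (drop i es)"
    unfolding d_eq_sum_weight by (metis append_take_drop_id sum_list_append map_append)
  then have "s * d es = s * d (take i es) + s * d (drop i es)"
    by (simp add: distrib_left)
  moreover have "s * d (take i es) \<noteq> 0" using assms(2,3) by simp
  moreover note nonneg[OF set_take_subset, of i] nonneg[OF set_drop_subset, of i]
  ultimately have "0 < s * d es" by linarith
  then show ?thesis by auto
qed

lemma oriented_zero_avoiding:
  assumes "oriented T up"
  shows "zero_avoiding T k"
  unfolding zero_avoiding_def
proof (intro allI impI)
  fix es assume comp: "computation T es" and big: "dmax es > int k"
  have "\<exists>i. d (take i es) \<noteq> 0"
  proof (rule ccontr)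
    assume "\<not> ?thesis"
    then have "{\<bar>d (take i es)\<bar> | i. i \<le> length es} = {0}" by auto
    then show False using big by (simp add: dmax_def)
  qed
  then obtain i where i: "d (take i es) \<noteq> 0" by blast
  have "is_path T es" using comp by (simp add: computation_def)
  then have "\<forall>e\<in>set es. weight e \<in> {0, orientation (up (src (hd es)))}"
    using oriented_path_weight[OF assms] by blast
  moreover have "orientation b \<noteq> 0" for b by (simp add: orientation_def)
  ultimately show "d es \<noteq> 0" using d_take_nonzero_imp_d_nonzero i by blast
qed

definition wf_transducer :: "'a set \<Rightarrow> ('q, 'a) transducer \<Rightarrow> bool" where
  "wf_transducer \<Sigma> T \<longleftrightarrow>
     finite (states T) \<and> finite (trans T) \<and>
     (\<forall>p x y q. (p, (x, y), q) \<in> trans T \<longrightarrow> p \<in> states T \<and> q \<in> states T \<and>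
        set_option x \<subseteq> \<Sigma> \<and> set_option y \<subseteq> \<Sigma>) \<and>
     init T \<subseteq> states T \<and> fin T \<subseteq> states T"

lemma wf_transducerD:
  assumes "wf_transducer \<Sigma> T"
  shows "finite (states T)" "finite (trans T)" "init T \<subseteq> states T" "fin T \<subseteq> states T"
    and "(p, (x, y), q) \<in> trans T \<Longrightarrow>
      p \<in> states T \<and> q \<in> states T \<and> set_option x \<subseteq> \<Sigma> \<and> set_option y \<subseteq> \<Sigma>"
  using assms unfolding wf_transducer_def by blast+

lemma transducer_iff_wf: "transducer \<Sigma> T \<longleftrightarrow> wf_transducer \<Sigma> T \<and> init T \<noteq> {}"
  unfolding transducer_def wf_transducer_def Ball_def split_paired_All by blast

definition emap :: "('q \<Rightarrow> 'r) \<Rightarrow> ('q, 'a) edge \<Rightarrow> ('r, 'a) edge" where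
  "emap f e = (f (src e), fst (snd e), f (tgt e))"

lemma emap_simp [simp]: "emap f (p, l, q) = (f p, l, f q)"
  by (simp add: emap_def src_def tgt_def)

lemma mem_emap_image: "(p', l, q') \<in> emap f ` E \<longleftrightarrow> (\<exists>p q. (p, l, q) \<in> E \<and> p' = f p \<and> q' = f q)"
proof
  assume "(p', l, q') \<in> emap f ` E"
  then obtain e where "e \<in> E" "(p', l, q') = emap f e" by blast
  then show "\<exists>p q. (p, l, q) \<in> E \<and> p' = f p \<and> q' = f q" by (cases e) auto
next
  assume "\<exists>p q. (p, l, q) \<in> E \<and> p' = f p \<and> q' = f q"
  then obtain p q where "(p, l, q) \<in> E" "p' = f p" "q' = f q" by blast
  then show "(p', l, q') \<in> emap f ` E" by (force intro: image_eqI[where x = "(p, l, q)"])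
qed

definition rename :: "('q \<Rightarrow> 'r) \<Rightarrow> ('q, 'a) transducer \<Rightarrow> ('r, 'a) transducer" where
  "rename f T = \<lparr>states = f ` states T, trans = emap f ` trans T, init = f ` init T, fin = f ` fin T\<rparr>"

lemma rel_rename:
  assumes "inj f"
  shows "rel (rename f T) = rel T"
proof -
  have "reach (rename f T) (f p) u v (f q) \<longleftrightarrow> reach T p u v q" for p u v q
  proof
    assume "reach (rename f T) (f p) u v (f q)"
    then show "reach T p u v q"
      using reach_pullback[of f "rename f T" T] assms
      by (force simp: rename_def mem_emap_image inj_eq)
  qed (rule reach_map[of T f "rename f T"], force simp: rename_def)
  then show ?thesis
    unfolding rel_eq_reach by (auto simp: rename_def)
qed

lemma wf_rename:
  assumes "wf_transducer \<Sigma> T"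
  shows "wf_transducer \<Sigma> (rename f T)"
  using wf_transducerD(1-4)[OF assms] unfolding wf_transducer_def
  by (auto simp: rename_def mem_emap_image dest: wf_transducerD(5)[OF assms])

lemma oriented_rename:
  "(\<And>q. g (f q) = q) \<Longrightarrow> oriented T up \<Longrightarrow> oriented (rename f T) (up \<circ> g)"
  unfolding oriented_def rename_def by (auto simp: emap_def src_def tgt_def weight_def)

definition tunion :: "('q, 'a) transducer \<Rightarrow> ('r, 'a) transducer \<Rightarrow> ('q + 'r, 'a) transducer" where
  "tunion T1 T2 = \<lparr>states = Inl ` states T1 \<union> Inr ` states T2,
     trans = emap Inl ` trans T1 \<union> emap Inr ` trans T2,
     init = Inl ` init T1 \<union> Inr ` init T2, fin = Inl ` fin T1 \<union> Inr ` fin T2\<rparr>"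

lemma reach_tunion_Inl: "reach (tunion T1 T2) (Inl p) u v q' \<longleftrightarrow> (\<exists>q. q' = Inl q \<and> reach T1 p u v q)"
proof
  assume "reach (tunion T1 T2) (Inl p) u v q'"
  then show "\<exists>q. q' = Inl q \<and> reach T1 p u v q"
    using reach_pullback[of Inl "tunion T1 T2" T1] by (force simp: tunion_def mem_emap_image)
qed (use reach_map[of T1 Inl "tunion T1 T2"] in \<open>force simp: tunion_def\<close>)

lemma reach_tunion_Inr: "reach (tunion T1 T2) (Inr p) u v q' \<longleftrightarrow> (\<exists>q. q' = Inr q \<and> reach T2 p u v q)"
proof
  assume "reach (tunion T1 T2) (Inr p) u v q'"
  then show "\<exists>q. q' = Inr q \<and> reach T2 p u v q"
    using reach_pullback[of Inr "tunion T1 T2" T2] by (force simp: tunion_def mem_emap_image)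
qed (use reach_map[of T2 Inr "tunion T1 T2"] in \<open>force simp: tunion_def\<close>)

lemma rel_tunion: "rel (tunion T1 T2) = rel T1 \<union> rel T2"
proof -
  have "init (tunion T1 T2) = Inl ` init T1 \<union> Inr ` init T2"
    and "fin (tunion T1 T2) = Inl ` fin T1 \<union> Inr ` fin T2"
    by (simp_all add: tunion_def)
  moreover have l: "reach T1 p u v q \<Longrightarrow> reach (tunion T1 T2) (Inl p) u v (Inl q)" for p u v q
    by (simp add: reach_tunion_Inl)
  moreover have r: "reach T2 p u v q \<Longrightarrow> reach (tunion T1 T2) (Inr p) u v (Inr q)" for p u v q
    by (simp add: reach_tunion_Inr)
  ultimately show ?thesis
    unfolding rel_eq_reach by (auto simp: reach_tunion_Inl reach_tunion_Inr) (use l r in blast)+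
qed

lemma wf_tunion:
  assumes "wf_transducer \<Sigma> T1" "wf_transducer \<Sigma> T2"
  shows "wf_transducer \<Sigma> (tunion T1 T2)"
  using wf_transducerD(1-4)[OF assms(1)] wf_transducerD(1-4)[OF assms(2)] unfolding wf_transducer_def
  by (auto simp: tunion_def mem_emap_image dest: wf_transducerD(5)[OF assms(1)] wf_transducerD(5)[OF assms(2)])

lemma oriented_tunion: "oriented T1 up1 \<Longrightarrow> oriented T2 up2 \<Longrightarrow> oriented (tunion T1 T2) (case_sum up1 up2)"
  unfolding oriented_def tunion_def by (auto simp: emap_def src_def tgt_def weight_def)

definition tconc :: "('q, 'a) transducer \<Rightarrow> ('r, 'a) transducer \<Rightarrow> ('q + 'r, 'a) transducer" where
  "tconc T1 T2 = \<lparr>states = Inl ` states T1 \<union> Inr ` states T2,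
     trans = emap Inl ` trans T1 \<union> emap Inr ` trans T2 \<union>
       (\<lambda>(p, q). (Inl p, (None, None), Inr q)) ` (fin T1 \<times> init T2),
     init = Inl ` init T1, fin = Inr ` fin T2\<rparr>"

lemma trans_tconc:
  "(p', l, q') \<in> trans (tconc T1 T2) \<longleftrightarrow>
     (\<exists>p q. (p, l, q) \<in> trans T1 \<and> p' = Inl p \<and> q' = Inl q) \<or>
     (\<exists>p q. (p, l, q) \<in> trans T2 \<and> p' = Inr p \<and> q' = Inr q) \<or>
     (\<exists>p q. p \<in> fin T1 \<and> q \<in> init T2 \<and> p' = Inl p \<and> l = (None, None) \<and> q' = Inr q)"
  unfolding tconc_def by (auto simp: mem_emap_image)

lemma tconc_simps [simp]:
  "states (tconc T1 T2) = Inl ` states T1 \<union> Inr ` states T2"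
  "init (tconc T1 T2) = Inl ` init T1" "fin (tconc T1 T2) = Inr ` fin T2"
  by (simp_all add: tconc_def)

lemma reach_tconc_Inl: "reach T1 p u v q \<Longrightarrow> reach (tconc T1 T2) (Inl p) u v (Inl q)"
  by (rule reach_map) (simp add: trans_tconc)

lemma reach_tconc_Inr: "reach (tconc T1 T2) (Inr p) u v q' \<longleftrightarrow> (\<exists>q. q' = Inr q \<and> reach T2 p u v q)"
proof
  have "\<And>p l q'. (Inr p, l, q') \<in> trans (tconc T1 T2) \<Longrightarrow> \<exists>q. q' = Inr q \<and> (p, l, q) \<in> trans T2"
    by (auto simp: trans_tconc)
  from reach_pullback[OF this] show "reach (tconc T1 T2) (Inr p) u v q' \<Longrightarrow> \<exists>q. q' = Inr q \<and> reach T2 p u v q"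
    by blast
qed (use reach_map[of T2 Inr "tconc T1 T2"] in \<open>auto simp: trans_tconc\<close>)

lemma reach_tconc_Inl_Inr:
  "reach (tconc T1 T2) p' u v r' \<Longrightarrow> p' = Inl p \<Longrightarrow> r' = Inr r \<Longrightarrow>
     \<exists>f\<in>fin T1. \<exists>i\<in>init T2. \<exists>u1 v1 u2 v2. u = u1 @ u2 \<and> v = v1 @ v2 \<and>
       reach T1 p u1 v1 f \<and> reach T2 i u2 v2 r"
proof (induction arbitrary: p rule: reach.induct)
  case (step p' x y q' u v r')
  from step.hyps(1) step.prems(1) consider
      (old) q where "(p, (x, y), q) \<in> trans T1" "q' = Inl q"
    | (link) i where "p \<in> fin T1" "i \<in> init T2" "q' = Inr i" "x = None" "y = None"
    by (auto simp: trans_tconc)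
  then show ?case
  proof cases
    case old
    then obtain f i u1 v1 u2 v2 where "f \<in> fin T1" "i \<in> init T2" "u = u1 @ u2" "v = v1 @ v2"
      "reach T1 q u1 v1 f" "reach T2 i u2 v2 r"
      using step.IH[OF old(2) step.prems(2)] by blast
    moreover from old(1) this(5) have "reach T1 p (olist x @ u1) (olist y @ v1) f"
      by (rule reach.step)
    ultimately show ?thesis by (metis append_assoc)
  next
    case link
    then have "reach (tconc T1 T2) (Inr i) u v (Inr r)" using step.hyps(2) step.prems(2) by simp
    then have "reach T2 i u v r" by (simp add: reach_tconc_Inr)
    then have "olist x @ u = [] @ u \<and> olist y @ v = [] @ v \<and> reach T1 p [] [] p \<and> reach T2 i u v r"
      using link by (simp add: olist_def reach.refl)
    then show ?thesis using link(1,2) by blast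
  qed
qed simp

lemma rel_tconc: "rel (tconc T1 T2) = rel_prod (rel T1) (rel T2)"
proof (intro set_eqI iffI)
  fix w assume "w \<in> rel (tconc T1 T2)"
  then obtain u v p q where "w = (u, v)" "p \<in> init T1" "q \<in> fin T2"
    "reach (tconc T1 T2) (Inl p) u v (Inr q)"
    by (auto simp: rel_eq_reach)
  then show "w \<in> rel_prod (rel T1) (rel T2)"
    using reach_tconc_Inl_Inr[of T1 T2 "Inl p" u v "Inr q" p q]
    unfolding rel_prod_def rel_eq_reach by blast
next
  fix w assume "w \<in> rel_prod (rel T1) (rel T2)"
  then obtain u1 v1 u2 v2 p f i q where w: "w = (u1 @ u2, v1 @ v2)"
    and ends: "p \<in> init T1" "f \<in> fin T1" "i \<in> init T2" "q \<in> fin T2"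
    and runs: "reach T1 p u1 v1 f" "reach T2 i u2 v2 q"
    by (auto simp: rel_prod_def rel_eq_reach)
  have link: "(Inl f, (None, None), Inr i) \<in> trans (tconc T1 T2)"
    using ends by (simp add: trans_tconc)
  have "reach (tconc T1 T2) (Inr i) u2 v2 (Inr q)"
    using runs(2) by (simp add: reach_tconc_Inr)
  from reach.step[OF link this] have "reach (tconc T1 T2) (Inl f) u2 v2 (Inr q)"
    by (simp add: olist_def)
  then have "reach (tconc T1 T2) (Inl p) (u1 @ u2) (v1 @ v2) (Inr q)"
    using reach_append[OF reach_tconc_Inl[OF runs(1)]] by blast
  then show "w \<in> rel (tconc T1 T2)"
    using w ends unfolding rel_eq_reach by auto
qed

lemma wf_tconc:
  assumes "wf_transducer \<Sigma> T1" "wf_transducer \<Sigma> T2"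
  shows "wf_transducer \<Sigma> (tconc T1 T2)"
proof -
  have "finite (fin T1 \<times> init T2)"
    using wf_transducerD(1,3,4)[OF assms(1)] wf_transducerD(1,3)[OF assms(2)]
    by (meson finite_SigmaI finite_subset)
  then have "finite (trans (tconc T1 T2))"
    using wf_transducerD(2)[OF assms(1)] wf_transducerD(2)[OF assms(2)] by (simp add: tconc_def)
  then show ?thesis
    using wf_transducerD(1-4)[OF assms(1)] wf_transducerD(1-4)[OF assms(2)] unfolding wf_transducer_def
    by (auto simp: trans_tconc dest: wf_transducerD(5)[OF assms(1)] wf_transducerD(5)[OF assms(2)])
qed

lemma oriented_tconc: "oriented T1 (\<lambda>_. b) \<Longrightarrow> oriented T2 (\<lambda>_. b) \<Longrightarrow> oriented (tconc T1 T2) (\<lambda>_. b)"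
  unfolding oriented_def tconc_def by (auto simp: src_def tgt_def weight_def olist_def)

definition one_tape :: "bool \<Rightarrow> 'a list \<Rightarrow> 'a list \<times> 'a list" where
  "one_tape input w = (if input then (w, []) else ([], w))"

definition one_tape_label :: "bool \<Rightarrow> 'a \<Rightarrow> 'a option \<times> 'a option" where
  "one_tape_label input c = (if input then (Some c, None) else (None, Some c))"

lemma one_tape_image: "one_tape True ` A = A \<times> {[]}" "one_tape False ` A = {[]} \<times> A"
  by (auto simp: one_tape_def)

lemma one_tape_Cons:
  "one_tape b w = (u, v) \<Longrightarrow> one_tape_label b c = (x, y) \<Longrightarrow>
     one_tape b (c # w) = (olist x @ u, olist y @ v)"
  by (auto simp: one_tape_def one_tape_label_def olist_def split: if_splits)

definition nfa_transducer ::
  "bool \<Rightarrow> 'a set \<Rightarrow> nat set \<Rightarrow> (nat \<Rightarrow> 'a \<Rightarrow> nat set) \<Rightarrow> nat set \<Rightarrow> nat set \<Rightarrow> (nat, 'a) transducer" where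
  "nfa_transducer b \<Sigma> Q \<delta> I F = \<lparr>states = Q,
     trans = {(p, one_tape_label b c, q) | p c q. p \<in> Q \<and> c \<in> \<Sigma> \<and> q \<in> \<delta> p c \<and> q \<in> Q},
     init = I, fin = F\<rparr>"

lemma trans_nfa_transducer:
  "(p, l, q) \<in> trans (nfa_transducer b \<Sigma> Q \<delta> I F) \<longleftrightarrow>
     (\<exists>c\<in>\<Sigma>. l = one_tape_label b c \<and> p \<in> Q \<and> q \<in> \<delta> p c \<and> q \<in> Q)"
  by (auto simp: nfa_transducer_def)

lemma nfa_transducer_simps [simp]:
  "states (nfa_transducer b \<Sigma> Q \<delta> I F) = Q"
  "init (nfa_transducer b \<Sigma> Q \<delta> I F) = I" "fin (nfa_transducer b \<Sigma> Q \<delta> I F) = F"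
  by (simp_all add: nfa_transducer_def)

lemma nfa_steps_eq_UN: "nfa_steps \<delta> S w = (\<Union>p\<in>S. nfa_steps \<delta> {p} w)"
proof (induction w arbitrary: S)
  case (Cons c w)
  have "nfa_steps \<delta> S (c # w) = (\<Union>p\<in>(\<Union>q\<in>S. \<delta> q c). nfa_steps \<delta> {p} w)"
    using Cons.IH[of "\<Union>q\<in>S. \<delta> q c"] by simp
  also have "\<dots> = (\<Union>q\<in>S. nfa_steps \<delta> {q} (c # w))"
    using Cons.IH[of "\<delta> _ c"] by auto
  finally show ?case .
qed simp

lemma reach_nfa_transducer_imp:
  "reach (nfa_transducer b \<Sigma> Q \<delta> I F) p u v q \<Longrightarrow>
     \<exists>w. one_tape b w = (u, v) \<and> set w \<subseteq> \<Sigma> \<and> q \<in> nfa_steps \<delta> {p} w"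
proof (induction rule: reach.induct)
  case (refl q)
  show ?case by (rule exI[of _ "[]"]) (simp add: one_tape_def)
next
  case (step p x y q u v r)
  obtain c where c: "one_tape_label b c = (x, y)" "c \<in> \<Sigma>" "q \<in> \<delta> p c"
    using step.hyps(1) by (auto simp: trans_nfa_transducer)
  obtain w where w: "one_tape b w = (u, v)" "set w \<subseteq> \<Sigma>" "r \<in> nfa_steps \<delta> {q} w"
    using step.IH by blast
  have "r \<in> nfa_steps \<delta> {p} (c # w)"
    using c(3) w(3) nfa_steps_eq_UN[of \<delta> "\<delta> p c" w] by auto
  with c w show ?case
    by (intro exI[of _ "c # w"]) (simp add: one_tape_Cons)
qed

lemma reach_nfa_transducer_if:
  assumes closed: "\<forall>q\<in>Q. \<forall>c\<in>\<Sigma>. \<delta> q c \<subseteq> Q"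
  shows "one_tape b w = (u, v) \<Longrightarrow> set w \<subseteq> \<Sigma> \<Longrightarrow> p \<in> Q \<Longrightarrow> q \<in> nfa_steps \<delta> {p} w \<Longrightarrow>
    reach (nfa_transducer b \<Sigma> Q \<delta> I F) p u v q"
proof (induction w arbitrary: p u v)
  case Nil
  then show ?case by (simp add: one_tape_def reach.refl)
next
  case (Cons c w)
  obtain p' where p': "p' \<in> \<delta> p c" "q \<in> nfa_steps \<delta> {p'} w"
    using Cons.prems(4) nfa_steps_eq_UN[of \<delta> "\<delta> p c" w] by auto
  obtain u' v' where uv': "one_tape b w = (u', v')" by fastforce
  obtain x y where xy: "one_tape_label b c = (x, y)" by fastforce
  have "p' \<in> Q" using closed Cons.prems p' by auto
  then have "(p, (x, y), p') \<in> trans (nfa_transducer b \<Sigma> Q \<delta> I F)"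
    using Cons.prems p' xy[symmetric] by (auto simp: trans_nfa_transducer)
  moreover have "reach (nfa_transducer b \<Sigma> Q \<delta> I F) p' u' v' q"
    using Cons.IH[OF uv'] Cons.prems p' \<open>p' \<in> Q\<close> by simp
  ultimately show ?case
    using reach.step one_tape_Cons[OF uv' xy] Cons.prems(1) by fastforce
qed

lemma rel_nfa_transducer:
  assumes "\<forall>q\<in>Q. \<forall>c\<in>\<Sigma>. \<delta> q c \<subseteq> Q" and "I \<subseteq> Q"
  shows "rel (nfa_transducer b \<Sigma> Q \<delta> I F) = one_tape b ` {w. set w \<subseteq> \<Sigma> \<and> nfa_steps \<delta> I w \<inter> F \<noteq> {}}"
proof (intro set_eqI iffI)
  fix z assume "z \<in> rel (nfa_transducer b \<Sigma> Q \<delta> I F)"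
  then obtain u v p q where z: "z = (u, v)" and "p \<in> I" "q \<in> F"
    and "reach (nfa_transducer b \<Sigma> Q \<delta> I F) p u v q"
    by (auto simp: rel_eq_reach)
  then obtain w where "one_tape b w = z" "set w \<subseteq> \<Sigma>" "q \<in> nfa_steps \<delta> I w \<inter> F"
    using reach_nfa_transducer_imp nfa_steps_eq_UN[of \<delta> I] by blast
  then show "z \<in> one_tape b ` {w. set w \<subseteq> \<Sigma> \<and> nfa_steps \<delta> I w \<inter> F \<noteq> {}}" by blast
next
  fix z assume "z \<in> one_tape b ` {w. set w \<subseteq> \<Sigma> \<and> nfa_steps \<delta> I w \<inter> F \<noteq> {}}"
  then obtain w q where w: "one_tape b w = z" "set w \<subseteq> \<Sigma>" and "q \<in> F" "q \<in> nfa_steps \<delta> I w"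
    by blast
  moreover from this(4) obtain p where "p \<in> I" "q \<in> nfa_steps \<delta> {p} w"
    using nfa_steps_eq_UN[of \<delta> I w] by blast
  moreover obtain u v where "z = (u, v)" by fastforce
  ultimately have "reach (nfa_transducer b \<Sigma> Q \<delta> I F) p u v q"
    using reach_nfa_transducer_if[OF assms(1)] assms(2) by blast
  then show "z \<in> rel (nfa_transducer b \<Sigma> Q \<delta> I F)"
    using \<open>z = (u, v)\<close> \<open>p \<in> I\<close> \<open>q \<in> F\<close> unfolding rel_eq_reach by auto
qed

lemma wf_nfa_transducer:
  assumes "finite \<Sigma>" "finite Q" "\<forall>q\<in>Q. \<forall>c\<in>\<Sigma>. \<delta> q c \<subseteq> Q" "I \<subseteq> Q" "F \<subseteq> Q"
  shows "wf_transducer \<Sigma> (nfa_transducer b \<Sigma> Q \<delta> I F)"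
proof -
  have "trans (nfa_transducer b \<Sigma> Q \<delta> I F) \<subseteq> Q \<times> one_tape_label b ` \<Sigma> \<times> Q"
    by (auto simp: trans_nfa_transducer)
  then have "finite (trans (nfa_transducer b \<Sigma> Q \<delta> I F))"
    by (rule finite_subset) (simp add: assms)
  then show ?thesis
    using assms(2,4,5) unfolding wf_transducer_def
    by (auto simp: trans_nfa_transducer one_tape_label_def split: if_splits)
qed

lemma oriented_nfa_transducer: "oriented (nfa_transducer b \<Sigma> Q \<delta> I F) (\<lambda>_. b)"
  unfolding oriented_def Ball_def split_paired_All trans_nfa_transducer
  by (auto simp: one_tape_label_def weight_def olist_def orientation_def src_def tgt_def)

definition oriented_realizable :: "'a set \<Rightarrow> ('a list \<times> 'a list) set \<Rightarrow> bool" where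
  "oriented_realizable \<Sigma> R \<longleftrightarrow>
     (\<exists>(T :: (nat, 'a) transducer) up. wf_transducer \<Sigma> T \<and> oriented T up \<and> rel T = R)"

lemma oriented_realizable_if_sum_states:
  fixes T :: "(nat + nat, 'a) transducer"
  assumes "wf_transducer \<Sigma> T" "oriented T up"
  shows "oriented_realizable \<Sigma> (rel T)"
  unfolding oriented_realizable_def
  using wf_rename[OF assms(1)] oriented_rename[of sum_decode sum_encode, OF sum_encode_inverse assms(2)]
    rel_rename[OF inj_sum_encode, of T]
  by blast

lemma oriented_realizable_empty: "oriented_realizable \<Sigma> {}"
proof -
  let ?T = "\<lparr>states = {}, trans = {}, init = {}, fin = {}\<rparr> :: (nat, 'a) transducer"
  have "wf_transducer \<Sigma> ?T" "oriented ?T (\<lambda>_. True)" "rel ?T = {}"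
    by (simp_all add: wf_transducer_def oriented_def rel_eq_reach)
  then show ?thesis unfolding oriented_realizable_def by blast
qed

lemma oriented_realizable_Un:
  assumes "oriented_realizable \<Sigma> R1" "oriented_realizable \<Sigma> R2"
  shows "oriented_realizable \<Sigma> (R1 \<union> R2)"
proof -
  obtain T1 :: "(nat, 'a) transducer" and up1 where "wf_transducer \<Sigma> T1" "oriented T1 up1" "rel T1 = R1"
    using assms(1) unfolding oriented_realizable_def by blast
  moreover obtain T2 :: "(nat, 'a) transducer" and up2 where "wf_transducer \<Sigma> T2" "oriented T2 up2" "rel T2 = R2"
    using assms(2) unfolding oriented_realizable_def by blast
  ultimately show ?thesis
    using oriented_realizable_if_sum_states[OF wf_tunion oriented_tunion] rel_tunion by metis
qed

lemma oriented_realizable_Union: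
  "finite P \<Longrightarrow> \<forall>X\<in>P. oriented_realizable \<Sigma> X \<Longrightarrow> oriented_realizable \<Sigma> (\<Union>P)"
  by (induction P rule: finite_induct) (auto intro: oriented_realizable_empty oriented_realizable_Un)

lemma oriented_realizable_rel_prod:
  fixes T1 T2 :: "(nat, 'a) transducer"
  assumes "wf_transducer \<Sigma> T1" "oriented T1 (\<lambda>_. b)" "wf_transducer \<Sigma> T2" "oriented T2 (\<lambda>_. b)"
  shows "oriented_realizable \<Sigma> (rel_prod (rel T1) (rel T2))"
  using oriented_realizable_if_sum_states[OF wf_tconc oriented_tconc] assms rel_tconc by metis

lemma oriented_realizable_imp_zero_avoiding:
  assumes "oriented_realizable \<Sigma> R"
  shows "\<exists>T :: (nat, 'a) transducer. transducer \<Sigma> T \<and> zero_avoiding T k \<and> rel T = R"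
proof -
  obtain T :: "(nat, 'a) transducer" and up where T: "wf_transducer \<Sigma> T" "oriented T up" "rel T = R"
    using assms unfolding oriented_realizable_def by blast
  show ?thesis
  proof (cases "init T = {}")
    case False
    then show ?thesis using T oriented_zero_avoiding transducer_iff_wf by blast
  next
    case True
    let ?T = "\<lparr>states = {0}, trans = {}, init = {0}, fin = {}\<rparr> :: (nat, 'a) transducer"
    have "transducer \<Sigma> ?T" "oriented ?T (\<lambda>_. True)" "rel ?T = R"
      using True T(3) by (simp_all add: transducer_def oriented_def rel_eq_reach)
    then show ?thesis using oriented_zero_avoiding by blast
  qed
qed

lemma regular_one_tape_transducer:
  assumes "regular \<Sigma> A" "finite \<Sigma>"
  obtains N :: "(nat, 'a) transducer"
  where "wf_transducer \<Sigma> N" "oriented N (\<lambda>_. b)" "rel N = one_tape b ` A"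
proof -
  obtain Q :: "nat set" and \<delta> I F where nfa: "finite Q" "I \<subseteq> Q" "F \<subseteq> Q" "\<forall>q\<in>Q. \<forall>c\<in>\<Sigma>. \<delta> q c \<subseteq> Q"
    and A: "A = {w. set w \<subseteq> \<Sigma> \<and> nfa_steps \<delta> I w \<inter> F \<noteq> {}}"
    using assms(1) unfolding regular_def by blast
  show ?thesis
  proof (rule that)
    show "wf_transducer \<Sigma> (nfa_transducer b \<Sigma> Q \<delta> I F)"
      by (rule wf_nfa_transducer[OF assms(2) nfa(1,4,2,3)])
    show "rel (nfa_transducer b \<Sigma> Q \<delta> I F) = one_tape b ` A"
      unfolding A by (rule rel_nfa_transducer[OF nfa(4,2)])
  qed (rule oriented_nfa_transducer)
qed

lemma letter_to_letter_oriented: "letter_to_letter \<Sigma> T \<Longrightarrow> oriented T (\<lambda>_. b)"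
  unfolding letter_to_letter_def oriented_def by (auto simp: weight_def olist_def)

lemma letter_to_letter_wf: "letter_to_letter \<Sigma> T \<Longrightarrow> wf_transducer \<Sigma> T"
  unfolding letter_to_letter_def by (simp add: transducer_iff_wf)

lemma oriented_realizable_left_piece:
  assumes "left_piece \<Sigma> X" "finite \<Sigma>"
  shows "oriented_realizable \<Sigma> X"
proof -
  obtain T :: "(nat, 'a) transducer" and A b
    where T: "letter_to_letter \<Sigma> T" and A: "regular \<Sigma> A" and X: "X = rel_prod (rel T) (one_tape b ` A)"
    using assms(1) unfolding left_piece_def synchronous_rel_def one_tape_image[symmetric] by blast
  obtain N :: "(nat, 'a) transducer" where "wf_transducer \<Sigma> N" "oriented N (\<lambda>_. b)" "rel N = one_tape b ` A"
    using regular_one_tape_transducer[OF A assms(2), where b = b] by blast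
  then show ?thesis
    unfolding X using oriented_realizable_rel_prod[OF letter_to_letter_wf[OF T] letter_to_letter_oriented[OF T]]
    by metis
qed

lemma oriented_realizable_right_piece:
  assumes "right_piece \<Sigma> X" "finite \<Sigma>"
  shows "oriented_realizable \<Sigma> X"
proof -
  obtain T :: "(nat, 'a) transducer" and A b
    where T: "letter_to_letter \<Sigma> T" and A: "regular \<Sigma> A" and X: "X = rel_prod (one_tape b ` A) (rel T)"
    using assms(1) unfolding right_piece_def synchronous_rel_def one_tape_image[symmetric] by blast
  obtain N :: "(nat, 'a) transducer" where "wf_transducer \<Sigma> N" "oriented N (\<lambda>_. b)" "rel N = one_tape b ` A"
    using regular_one_tape_transducer[OF A assms(2), where b = b] by blast
  then show ?thesis
    unfolding X using oriented_realizable_rel_prod[OF _ _ letter_to_letter_wf[OF T] letter_to_letter_oriented[OF T]]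
    by metis
qed

lemma oriented_realizable_if_left_synchronous:
  assumes "left_synchronous \<Sigma> R" "finite \<Sigma>"
  shows "oriented_realizable \<Sigma> R"
proof -
  obtain P where "finite P" "\<forall>X\<in>P. left_piece \<Sigma> X" "R = \<Union>P"
    using assms(1) unfolding left_synchronous_def by blast
  moreover have "\<forall>X\<in>P. oriented_realizable \<Sigma> X"
    using \<open>\<forall>X\<in>P. left_piece \<Sigma> X\<close> oriented_realizable_left_piece[OF _ assms(2)] by blast
  ultimately show ?thesis using oriented_realizable_Union by blast
qed

lemma oriented_realizable_if_right_synchronous:
  assumes "right_synchronous \<Sigma> R" "finite \<Sigma>"
  shows "oriented_realizable \<Sigma> R"
proof -
  obtain P where "finite P" "\<forall>X\<in>P. right_piece \<Sigma> X" "R = \<Union>P"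
    using assms(1) unfolding right_synchronous_def by blast
  moreover have "\<forall>X\<in>P. oriented_realizable \<Sigma> X"
    using \<open>\<forall>X\<in>P. right_piece \<Sigma> X\<close> oriented_realizable_right_piece[OF _ assms(2)] by blast
  ultimately show ?thesis using oriented_realizable_Union by blast
qed

definition halving_transducer :: "'a \<Rightarrow> (nat, 'a) transducer" where
  "halving_transducer a = \<lparr>states = {0, 1},
     trans = {(0, (Some a, None), 1), (1, (Some a, Some a), 0)}, init = {0}, fin = {0}\<rparr>"

lemma reach_halving_transducer_imp:
  "reach (halving_transducer a) p u v q \<Longrightarrow> q = 0 \<Longrightarrow>
     (p = 0 \<longrightarrow> (\<exists>i. u = replicate (2 * i) a \<and> v = replicate i a)) \<and>
     (p = 1 \<longrightarrow> (\<exists>i. u = a # replicate (2 * i) a \<and> v = a # replicate i a))"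
proof (induction rule: reach.induct)
  case (refl q)
  then show ?case by (auto intro: exI[of _ 0])
next
  case (step p x y q u v r)
  then consider "p = 0" "x = Some a" "y = None" "q = 1" | "p = 1" "x = Some a" "y = Some a" "q = 0"
    by (auto simp: halving_transducer_def)
  then show ?case
  proof cases
    case 1
    then obtain i where "u = a # replicate (2 * i) a" "v = a # replicate i a"
      using step.IH step.prems by auto
    then have "olist x @ u = replicate (2 * Suc i) a \<and> olist y @ v = replicate (Suc i) a"
      using 1 by (simp add: olist_def)
    then show ?thesis using 1 by (metis zero_neq_one)
  next
    case 2
    then show ?thesis using step.IH step.prems by (auto simp: olist_def)
  qed
qed

lemma reach_halving_transducer: "reach (halving_transducer a) 0 (replicate (2 * i) a) (replicate i a) 0"
proof (induction i)
  case 0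
  show ?case by (simp add: reach.refl)
next
  case (Suc i)
  have "(0, (Some a, None), 1) \<in> trans (halving_transducer a)"
    and "(1, (Some a, Some a), 0) \<in> trans (halving_transducer a)"
    by (simp_all add: halving_transducer_def)
  from reach.step[OF this(1) reach.step[OF this(2) Suc.IH]] show ?case
    by (simp add: olist_def)
qed

lemma rel_halving_transducer:
  "rel (halving_transducer a) = {(replicate (2 * i) a, replicate i a) | i. True}"
proof -
  have "init (halving_transducer a) = {0}" "fin (halving_transducer a) = {0}"
    by (simp_all add: halving_transducer_def)
  moreover have "reach (halving_transducer a) 0 u v 0 \<longleftrightarrow> (\<exists>i. u = replicate (2 * i) a \<and> v = replicate i a)"
    for u v using reach_halving_transducer_imp[of a 0 u v 0] reach_halving_transducer by auto
  ultimately show ?thesis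
    unfolding rel_eq_reach by auto
qed

lemma halving_transducer_zero_avoiding:
  assumes "a \<in> \<Sigma>"
  shows "transducer \<Sigma> (halving_transducer a) \<and> zero_avoiding (halving_transducer a) k"
proof
  show "transducer \<Sigma> (halving_transducer a)"
    using assms unfolding transducer_def halving_transducer_def by simp
  have "oriented (halving_transducer a) (\<lambda>_. True)"
    by (simp add: oriented_def halving_transducer_def weight_def olist_def orientation_def)
  then show "zero_avoiding (halving_transducer a) k" by (rule oriented_zero_avoiding)
qed

definition length_preserving :: "('a list \<times> 'a list) set \<Rightarrow> bool" where
  "length_preserving S \<longleftrightarrow> (\<forall>(x, y)\<in>S. length x = length y)"

definition one_sided :: "('a list \<times> 'a list) set \<Rightarrow> bool" where
  "one_sided B \<longleftrightarrow> (\<forall>(w, z)\<in>B. z = []) \<or> (\<forall>(w, z)\<in>B. w = [])"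

lemma reach_letter_to_letter_length:
  "reach T p u v q \<Longrightarrow> letter_to_letter \<Sigma> T \<Longrightarrow> length u = length v"
  by (induction rule: reach.induct) (auto simp: letter_to_letter_def olist_def)

lemma synchronous_rel_length_preserving: "synchronous_rel \<Sigma> S \<Longrightarrow> length_preserving S"
  unfolding synchronous_rel_def length_preserving_def rel_eq_reach
  using reach_letter_to_letter_length by fast

lemma left_piece_product_shape:
  assumes "left_piece \<Sigma> X"
  obtains S B where "length_preserving S" "one_sided B" "X = rel_prod S B"
proof -
  obtain S A where "synchronous_rel \<Sigma> S" "X = rel_prod S (A \<times> {[]}) \<or> X = rel_prod S ({[]} \<times> A)"
    using assms unfolding left_piece_def by blast
  moreover have "one_sided (A \<times> {[]})" "one_sided ({[]} \<times> A)" by (auto simp: one_sided_def)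
  ultimately show ?thesis using that synchronous_rel_length_preserving by blast
qed

lemma right_piece_product_shape:
  assumes "right_piece \<Sigma> X"
  obtains S B where "length_preserving S" "one_sided B" "X = rel_prod B S"
proof -
  obtain S A where "synchronous_rel \<Sigma> S" "X = rel_prod (A \<times> {[]}) S \<or> X = rel_prod ({[]} \<times> A) S"
    using assms unfolding right_piece_def by blast
  moreover have "one_sided (A \<times> {[]})" "one_sided ({[]} \<times> A)" by (auto simp: one_sided_def)
  ultimately show ?thesis using that synchronous_rel_length_preserving by blast
qed

text \<open>Swapping the one-sided factors of two elements keeps them in the product; the halving
  constraint then forces their output lengths to agree.\<close>

lemma output_length_unique_in_halving_product:
  assumes S: "length_preserving S" and B: "one_sided B"
    and X: "X = rel_prod S B \<or> X = rel_prod B S"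
    and halving: "\<forall>(u, v)\<in>X. length u = 2 * length v"
    and "(u, v) \<in> X" "(u', v') \<in> X"
  shows "length v = length v'"
proof -
  have split: "\<exists>x y w z. (x, y) \<in> S \<and> (w, z) \<in> B \<and> length v = length y + length z"
    if "(u, v) \<in> X" for u v
  proof -
    from that X obtain u1 v1 u2 v2 where "v = v1 @ v2"
      and "(u1, v1) \<in> S \<and> (u2, v2) \<in> B \<or> (u1, v1) \<in> B \<and> (u2, v2) \<in> S"
      unfolding rel_prod_def by blast
    then show ?thesis by (metis length_append add.commute)
  qed
  have join: "length x + length w = 2 * (length y + length z)" if "(x, y) \<in> S" "(w, z) \<in> B" for x y w z
  proof -
    have "(x @ w, y @ z) \<in> X \<or> (w @ x, z @ y) \<in> X"
      using that X unfolding rel_prod_def by blast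
    then show ?thesis using halving by auto
  qed
  obtain x y w z where xywz: "(x, y) \<in> S" "(w, z) \<in> B" "length v = length y + length z"
    using split[OF assms(5)] by blast
  obtain x' y' w' z' where xywz': "(x', y') \<in> S" "(w', z') \<in> B" "length v' = length y' + length z'"
    using split[OF assms(6)] by blast
  have "length x = length y" "length x' = length y'"
    using S xywz(1) xywz'(1) unfolding length_preserving_def by auto
  moreover note join[OF xywz(1,2)] join[OF xywz(1) xywz'(2)] join[OF xywz'(1,2)]
  moreover have "z = [] \<and> z' = [] \<or> w = [] \<and> w' = []"
    using B xywz(2) xywz'(2) unfolding one_sided_def by auto
  ultimately show ?thesis
    unfolding xywz(3) xywz'(3) by (elim disjE conjE) simp_all
qed

lemma finite_image_if_constant:
  assumes "\<forall>x\<in>X. \<forall>y\<in>X. f x = f y"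
  shows "finite (f ` X)"
proof (cases "X = {}")
  case False
  then obtain x where "x \<in> X" by blast
  then have "f ` X \<subseteq> {f x}" using assms by blast
  then show ?thesis using finite_subset by blast
qed simp

lemma halving_rel_not_finite_union_of_products:
  assumes "finite P" and R: "{(replicate (2 * i) a, replicate i a) | i. True} = \<Union>P"
    and products: "\<forall>X\<in>P. \<exists>S B. length_preserving S \<and> one_sided B \<and> (X = rel_prod S B \<or> X = rel_prod B S)"
  shows False
proof -
  let ?out = "\<lambda>(u :: 'a list, v :: 'a list). length v"
  have "finite (?out ` X)" if "X \<in> P" for X
  proof (rule finite_image_if_constant, clarify)
    fix u v u' v' assume "(u, v) \<in> X" "(u', v') \<in> X"
    moreover have "X \<subseteq> {(replicate (2 * i) a, replicate i a) | i. True}" using R that by blast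
    then have "\<forall>(u, v)\<in>X. length u = 2 * length v" by auto
    ultimately show "length v = length v'"
      using products that output_length_unique_in_halving_product by metis
  qed
  then have "finite (?out ` \<Union>P)" using assms(1) by (simp add: image_Union)
  moreover have "?out ` {(replicate (2 * i) a, replicate i a) | i. True} = UNIV" by force
  ultimately show False using R by simp
qed

lemma halving_rel_not_left_synchronous:
  "\<not> left_synchronous \<Sigma> {(replicate (2 * i) a, replicate i a) | i. True}"
proof
  assume "left_synchronous \<Sigma> {(replicate (2 * i) a, replicate i a) | i. True}"
  then obtain P where P: "finite P" "\<forall>X\<in>P. left_piece \<Sigma> X"
    "{(replicate (2 * i) a, replicate i a) | i. True} = \<Union>P"
    unfolding left_synchronous_def by blast
  have "\<exists>S B. length_preserving S \<and> one_sided B \<and> (X = rel_prod S B \<or> X = rel_prod B S)"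
    if "X \<in> P" for X
    using left_piece_product_shape[of \<Sigma> X] P(2) that by metis
  then show False
    by (rule halving_rel_not_finite_union_of_products[OF P(1,3), rule_format]) blast
qed

lemma halving_rel_not_right_synchronous:
  "\<not> right_synchronous \<Sigma> {(replicate (2 * i) a, replicate i a) | i. True}"
proof
  assume "right_synchronous \<Sigma> {(replicate (2 * i) a, replicate i a) | i. True}"
  then obtain P where P: "finite P" "\<forall>X\<in>P. right_piece \<Sigma> X"
    "{(replicate (2 * i) a, replicate i a) | i. True} = \<Union>P"
    unfolding right_synchronous_def by blast
  have "\<exists>S B. length_preserving S \<and> one_sided B \<and> (X = rel_prod S B \<or> X = rel_prod B S)"
    if "X \<in> P" for X
    using right_piece_product_shape[of \<Sigma> X] P(2) that by metis
  then show False
    by (rule halving_rel_not_finite_union_of_products[OF P(1,3), rule_format]) blast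
qed

theorem proposition4:
  fixes \<Sigma> :: "'a set"
  assumes "finite \<Sigma>"
  shows "(\<forall>R. left_synchronous \<Sigma> R \<longrightarrow>
            (\<exists>T :: (nat, 'a) transducer. transducer \<Sigma> T \<and> zero_avoiding T 0 \<and> rel T = R))
       \<and> (\<forall>R. right_synchronous \<Sigma> R \<longrightarrow>
            (\<exists>T :: (nat, 'a) transducer. transducer \<Sigma> T \<and> zero_avoiding T 0 \<and> rel T = R))
       \<and> (\<forall>a\<in>\<Sigma>.
            (\<exists>T :: (nat, 'a) transducer. transducer \<Sigma> T \<and> zero_avoiding T 0 \<and>
                rel T = {(replicate (2 * i) a, replicate i a) | i. True})
          \<and> \<not> left_synchronous \<Sigma> {(replicate (2 * i) a, replicate i a) | i. True}
          \<and> \<not> right_synchronous \<Sigma> {(replicate (2 * i) a, replicate i a) | i. True})"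
proof (intro conjI allI impI ballI)
  fix R assume "left_synchronous \<Sigma> R"
  then show "\<exists>T :: (nat, 'a) transducer. transducer \<Sigma> T \<and> zero_avoiding T 0 \<and> rel T = R"
    using oriented_realizable_if_left_synchronous[OF _ assms] oriented_realizable_imp_zero_avoiding by blast
next
  fix R assume "right_synchronous \<Sigma> R"
  then show "\<exists>T :: (nat, 'a) transducer. transducer \<Sigma> T \<and> zero_avoiding T 0 \<and> rel T = R"
    using oriented_realizable_if_right_synchronous[OF _ assms] oriented_realizable_imp_zero_avoiding by blast
next
  fix a assume "a \<in> \<Sigma>"
  then show "\<exists>T :: (nat, 'a) transducer. transducer \<Sigma> T \<and> zero_avoiding T 0 \<and>
      rel T = {(replicate (2 * i) a, replicate i a) | i. True}"
    using halving_transducer_zero_avoiding[of a \<Sigma> 0] rel_halving_transducer[of a] by blast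
next
  fix a
  show "\<not> left_synchronous \<Sigma> {(replicate (2 * i) a, replicate i a) | i. True}"
    by (rule halving_rel_not_left_synchronous)
  show "\<not> right_synchronous \<Sigma> {(replicate (2 * i) a, replicate i a) | i. True}"
    by (rule halving_rel_not_right_synchronous)
qed

end
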